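(* Let $n$ be a non-negative integer and $r,s\in\mathbb{C}\setminus\mathbb{Z}^{-}$ with $s\ne0$ and $r-s\notin\mathbb{Z}^{-}$. Then \[ \sum_{k=0}^{n-1}\frac{H_{n-1-k}}{(k+s)\binom{r+k+1}{r-s+1}}=\frac{H_n}{s\binom{r}{s}}-\frac{1}{r-s+1}\sum_{k=1}^{n}\frac{1}{k\binom{n-k+r}{r-s+1}}. \] In particular, for every real $s\geq1$, \[ \sum_{k=0}^{n}\frac{H_{n-k}}{(k+s)(k+1+s)}=\frac{n+1}{s(n+1+s)}H_{n+1}-\frac{1}{n+1+s}(H_{n+s}-H_{s-1}) \] and \[ \sum_{k=0}^{n}\frac{H_{n-k}}{(k+s)(k+1+s)(k+2+s)}=\frac12\left(\frac{H_{n+1}}{s(s+1)}-\frac{1}{n+1+s}(H_{n+1}+H_{n+s}-H_{s-1})+\frac{1}{n+2+s}(H_{n+1}+H_{n+1+s}-H_s)\right). \]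
   Context: $\mathbb{Z}^{-}$ denotes the set of negative integers. For complex $z$ not a negative integer, $H_z=\psi(z+1)+\gamma$ ($\psi$ the digamma function, $\gamma$ Euler's constant); for integers $m\geq 0$, $H_m=\sum_{j=1}^m1/j$. Binomial coefficients with complex entries: $\binom{x}{y}=\frac{\Gamma(x+1)}{\Gamma(y+1)\Gamma(x-y+1)}$. *)

theory Defs
  imports "HOL-Analysis.Analysis"
begin

definition neg_Ints :: "'a :: ring_1 set" where
  "neg_Ints = {of_int k | k. k < 0}"

definition Hz :: "'a :: {real_normed_field, banach} \<Rightarrow> 'a" where
  "Hz z = Digamma (z + 1) + of_real euler_mascheroni"

text \<open>Binomial coefficient with complex entries, Gamma(x+1)/(Gamma(y+1) Gamma(x-y+1)),
  the reciprocal Gamma being used in the denominator (1/Gamma = 0 at poles).\<close>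
definition cbinom :: "complex \<Rightarrow> complex \<Rightarrow> complex" where
  "cbinom x y = Gamma (x + 1) * rGamma (y + 1) * rGamma (x - y + 1)"

end

theory Submission
  imports Defs
begin

(* Everything rests on the summation by parts formula
     sum_{k<n} H_{n-1-k} (b_k - b_{k+1}) = H_n b_0 - sum_{k=1}^n b_{n-k} / k.
   For the general identity take b_k = Gamma(s+k) / Gamma(r+k+1): with u = r-s+1 the summand
   1/((k+s) binom(r+k+1, u)) equals Gamma(u) (b_k - b_{k+1}), while 1/(s binom(r, s)) = Gamma(u) b_0
   and 1/(u binom(m+r, u)) = Gamma(u) b_m.  The first real identity uses b_k = 1/(s+k); the
   resulting sum of 1/(k (s+N-k)) splits by partial fractions into H_N and a shifted harmonic sum,
   i.e. a difference of values of H_z.  The second real identity is half the difference of the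
   first one at s and at s+1. *)

lemma harm_summation_by_parts:
  fixes b :: "nat \<Rightarrow> 'a::real_normed_field"
  shows "(\<Sum>k<n. harm (n - 1 - k) * (b k - b (Suc k))) = harm n * b 0 - (\<Sum>k=1..n. b (n - k) / of_nat k)"
proof (induction n arbitrary: b)
  case 0
  show ?case by (simp add: harm_def)
next
  case (Suc n)
  have "(\<Sum>k<Suc n. harm (Suc n - 1 - k) * (b k - b (Suc k)))
      = harm n * (b 0 - b 1) + (\<Sum>k<n. harm (n - 1 - k) * (b (Suc k) - b (Suc (Suc k))))"
    by (subst sum.lessThan_Suc_shift) simp
  also have "\<dots> = harm n * (b 0 - b 1) + harm n * b 1 - (\<Sum>k=1..n. b (Suc (n - k)) / of_nat k)"
    using Suc.IH[of "\<lambda>k. b (Suc k)"] by simp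
  also have "\<dots> = harm (Suc n) * b 0 - (\<Sum>k=1..Suc n. b (Suc n - k) / of_nat k)"
    by (simp add: harm_Suc Suc_diff_le algebra_simps divide_inverse)
  finally show ?case .
qed

lemma plus_one_in_nonpos_Ints_iff: "(x + 1 \<in> \<int>\<^sub>\<le>\<^sub>0) = (x \<in> neg_Ints)"
proof
  assume "x + 1 \<in> \<int>\<^sub>\<le>\<^sub>0"
  then obtain m :: int where "m \<le> 0" "x + 1 = of_int m" by (auto elim!: nonpos_Ints_cases)
  then show "x \<in> neg_Ints" unfolding neg_Ints_def by (intro CollectI exI[of _ "m - 1"]) (auto simp: algebra_simps)
next
  assume "x \<in> neg_Ints"
  then obtain k :: int where "k < 0" "x = of_int k" unfolding neg_Ints_def by blast
  then show "x + 1 \<in> \<int>\<^sub>\<le>\<^sub>0" unfolding nonpos_Ints_def by (intro CollectI exI[of _ "k + 1"]) simp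
qed

lemma nonpos_Ints_iff_zero_or_neg_Ints: "(x \<in> \<int>\<^sub>\<le>\<^sub>0) = (x = 0 \<or> x \<in> neg_Ints)"
proof
  assume "x \<in> \<int>\<^sub>\<le>\<^sub>0"
  then obtain m :: int where "m \<le> 0" "x = of_int m" by (auto elim!: nonpos_Ints_cases)
  then show "x = 0 \<or> x \<in> neg_Ints" unfolding neg_Ints_def by (cases "m = 0") auto
next
  assume "x = 0 \<or> x \<in> neg_Ints"
  then show "x \<in> \<int>\<^sub>\<le>\<^sub>0" unfolding neg_Ints_def nonpos_Ints_def by force
qed

lemma plus_of_nat_notin_nonpos_Ints: "z \<notin> \<int>\<^sub>\<le>\<^sub>0 \<Longrightarrow> z + of_nat k \<notin> \<int>\<^sub>\<le>\<^sub>0"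
  using nonpos_Ints_diff_Nats[of "z + of_nat k" "of_nat k"] by auto

(* No hypotheses are needed: Gamma is the inverse of rGamma, so inverse also swaps them at the poles. *)
lemma inverse_cbinom: "inverse (cbinom x y) = Gamma (y + 1) * Gamma (x - y + 1) * rGamma (x + 1)"
  by (simp add: cbinom_def Gamma_def)

(* No condition on r is needed: poles of Gamma(r + k + 1) only enter through rGamma. *)
lemma harm_cbinom_sum:
  fixes r s :: complex
  assumes s: "s \<notin> \<int>\<^sub>\<le>\<^sub>0" and u: "r - s + 1 \<notin> \<int>\<^sub>\<le>\<^sub>0"
  shows "(\<Sum>k<n. harm (n - 1 - k) / ((of_nat k + s) * cbinom (r + of_nat k + 1) (r - s + 1)))
      = harm n / (s * cbinom r s)
        - 1 / (r - s + 1) * (\<Sum>k=1..n. 1 / (of_nat k * cbinom (of_nat (n - k) + r) (r - s + 1)))"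
proof -
  define u where "u = r - s + 1"
  define b where "b k = Gamma (s + of_nat k) * rGamma (r + of_nat k + 1)" for k
  have Gamma_s: "Gamma (s + of_nat k + 1) = (s + of_nat k) * Gamma (s + of_nat k)" for k
    using Gamma_plus1 plus_of_nat_notin_nonpos_Ints[OF s] by blast
  have "u \<noteq> 0" using u by (auto simp: u_def)
  have Gamma_u: "Gamma (u + 1) = u * Gamma u"
    using Gamma_plus1 u unfolding u_def by blast
  have inner: "inverse ((of_nat k + s) * cbinom (r + of_nat k + 1) u) = Gamma u * (b k - b (Suc k))" for k
  proof -
    define w where "w = s + of_nat k"
    define z where "z = r + of_nat k + 1"
    have "w \<noteq> 0" using plus_of_nat_notin_nonpos_Ints[OF s, of k] by (auto simp: w_def)
    have "z - u + 1 = w + 1" by (simp add: w_def z_def u_def)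
    have "inverse ((of_nat k + s) * cbinom (r + of_nat k + 1) u) = inverse w * inverse (cbinom z u)"
      by (simp add: w_def z_def add.commute divide_inverse)
    also have "\<dots> = Gamma (u + 1) * (Gamma (w + 1) / w) * rGamma (z + 1)"
      unfolding inverse_cbinom \<open>z - u + 1 = w + 1\<close> by (simp add: divide_inverse)
    also have "\<dots> = (z - w) * Gamma u * Gamma w * rGamma (z + 1)"
      using Gamma_u Gamma_s[of k] \<open>w \<noteq> 0\<close> by (simp add: w_def z_def u_def)
    also have "\<dots> = Gamma u * (Gamma w * rGamma z - Gamma (w + 1) * rGamma (z + 1))"
      using rGamma_plus1[of z] Gamma_s[of k] by (simp add: w_def algebra_simps)
    also have "\<dots> = Gamma u * (b k - b (Suc k))"
      by (simp add: b_def w_def z_def add_ac)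
    finally show ?thesis .
  qed
  have last: "inverse (u * cbinom (of_nat m + r) u) = Gamma u * b m" for m
  proof -
    have arg: "of_nat m + r - u + 1 = s + of_nat m" by (simp add: u_def)
    show ?thesis
      unfolding inverse_mult_distrib inverse_cbinom arg
      using Gamma_u \<open>u \<noteq> 0\<close> by (simp add: b_def add.commute)
  qed
  have first: "inverse (s * cbinom r s) = Gamma u * b 0"
  proof -
    have "r - s + 1 = u" "s \<noteq> 0" using s by (auto simp: u_def)
    then show ?thesis
      unfolding inverse_mult_distrib inverse_cbinom
      using Gamma_plus1[OF s] by (simp add: b_def)
  qed
  have "(\<Sum>k<n. harm (n - 1 - k) / ((of_nat k + s) * cbinom (r + of_nat k + 1) u))
      = Gamma u * (\<Sum>k<n. harm (n - 1 - k) * (b k - b (Suc k)))"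
    unfolding divide_inverse inner by (simp add: sum_distrib_left mult_ac)
  also have "\<dots> = Gamma u * (harm n * b 0 - (\<Sum>k=1..n. b (n - k) / of_nat k))"
    by (simp only: harm_summation_by_parts)
  also have "\<dots> = harm n * inverse (s * cbinom r s)
      - (\<Sum>k=1..n. inverse (of_nat k) * inverse (u * cbinom (of_nat (n - k) + r) u))"
    unfolding first last by (simp add: sum_distrib_left right_diff_distrib divide_inverse mult_ac)
  also have "\<dots> = harm n / (s * cbinom r s) - 1 / u * (\<Sum>k=1..n. 1 / (of_nat k * cbinom (of_nat (n - k) + r) u))"
    by (simp add: sum_distrib_left divide_inverse mult_ac)
  finally show ?thesis unfolding u_def .
qed

lemma Hz_plus_of_nat:
  fixes z :: "'a :: {real_normed_field, banach}"
  assumes "z + 1 \<notin> \<int>\<^sub>\<le>\<^sub>0"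
  shows "Hz (z + of_nat N) = Hz z + (\<Sum>j<N. 1 / (z + of_nat (Suc j)))"
proof (induction N)
  case 0
  show ?case by simp
next
  case (Suc N)
  have "z + of_nat (Suc N) \<noteq> 0"
    using plus_of_nat_notin_nonpos_Ints[OF assms, of N] by (auto simp: add_ac)
  then have "Digamma (z + of_nat (Suc N) + 1) = Digamma (z + of_nat (Suc N)) + 1 / (z + of_nat (Suc N))"
    by (rule Digamma_plus1)
  then have "Hz (z + of_nat (Suc N)) = Hz (z + of_nat N) + 1 / (z + of_nat (Suc N))"
    by (simp add: Hz_def add_ac)
  with Suc.IH show ?case by simp
qed

lemma sum_reciprocal_convolution:
  fixes t :: real
  assumes "t > 0"
  shows "(\<Sum>k=1..N. 1 / (t + real (N - k)) / real k)
      = (harm N + Hz (t - 1 + real N) - Hz (t - 1)) / (real N + t)"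
proof -
  have "(\<Sum>k=1..N. 1 / (t + real (N - k)) / real k)
      = (\<Sum>k=1..N. (1 / real k + 1 / (t + real (N - k))) / (real N + t))"
  proof (intro sum.cong refl)
    fix k assume k: "k \<in> {1..N}"
    define y where "y = t + real (N - k)"
    have nz: "real k \<noteq> 0" "y \<noteq> 0" "real k + y \<noteq> 0" and total: "real N + t = real k + y"
      using k assms by (auto simp: y_def)
    show "1 / (t + real (N - k)) / real k = (1 / real k + 1 / (t + real (N - k))) / (real N + t)"
      unfolding y_def[symmetric] total using nz by (simp add: divide_simps)
  qed
  also have "\<dots> = (harm N + (\<Sum>k=1..N. 1 / (t + real (N - k)))) / (real N + t)"
    by (simp only: sum_divide_distrib[symmetric] sum.distrib) (simp add: harm_def divide_inverse)
  also have "(\<Sum>k=1..N. 1 / (t + real (N - k))) = (\<Sum>k<N. 1 / (t + real (N - Suc k)))"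
    by (simp add: sum.atLeast1_atMost_eq)
  also have "\<dots> = (\<Sum>j<N. 1 / (t + real j))"
    by (rule sum.nat_diff_reindex)
  also have "\<dots> = Hz (t - 1 + real N) - Hz (t - 1)"
  proof -
    have "t - 1 + 1 \<notin> \<int>\<^sub>\<le>\<^sub>0" using assms by auto
    from Hz_plus_of_nat[OF this, of N] show ?thesis by simp
  qed
  finally show ?thesis by simp
qed

lemma sum_harm_div_rising2:
  fixes s :: real
  assumes "s > 0"
  shows "(\<Sum>k=0..n. harm (n - k) / ((real k + s) * (real k + 1 + s)))
      = (real n + 1) / (s * (real n + 1 + s)) * harm (n + 1)
        - 1 / (real n + 1 + s) * (Hz (real n + s) - Hz (s - 1))"
proof -
  define b where "b k = 1 / (s + real k)" for k
  have "(\<Sum>k=0..n. harm (n - k) / ((real k + s) * (real k + 1 + s)))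
      = (\<Sum>k<Suc n. harm (Suc n - 1 - k) * (b k - b (Suc k)))"
    unfolding atLeast0AtMost lessThan_Suc_atMost[symmetric]
  proof (intro sum.cong refl)
    fix k
    have "real k + s > 0" using assms by simp
    then show "harm (n - k) / ((real k + s) * (real k + 1 + s)) = harm (Suc n - 1 - k) * (b k - b (Suc k))"
      by (simp add: b_def field_simps)
  qed
  also have "\<dots> = harm (Suc n) * b 0 - (\<Sum>k=1..Suc n. b (Suc n - k) / of_nat k)"
    by (rule harm_summation_by_parts)
  also have "\<dots> = harm (n + 1) / s - (harm (n + 1) + Hz (real n + s) - Hz (s - 1)) / (real n + 1 + s)"
    using sum_reciprocal_convolution[OF assms, of "Suc n"] by (simp add: b_def add_ac)
  also have "\<dots> = (real n + 1) / (s * (real n + 1 + s)) * harm (n + 1)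
        - 1 / (real n + 1 + s) * (Hz (real n + s) - Hz (s - 1))"
  proof -
    define A where "A = real n + 1 + s"
    have "A > 0" and n1: "real n + 1 = A - s" using assms by (simp_all add: A_def)
    show ?thesis unfolding A_def[symmetric] n1 using \<open>A > 0\<close> assms by (simp add: field_simps)
  qed
  finally show ?thesis .
qed

lemma sum_harm_div_rising3:
  fixes s :: real
  assumes "s > 0"
  shows "(\<Sum>k=0..n. harm (n - k) / ((real k + s) * (real k + 1 + s) * (real k + 2 + s)))
      = 1 / 2 * (harm (n + 1) / (s * (s + 1))
          - 1 / (real n + 1 + s) * (harm (n + 1) + Hz (real n + s) - Hz (s - 1))
          + 1 / (real n + 2 + s) * (harm (n + 1) + Hz (real n + 1 + s) - Hz s))"
proof -
  have "(\<Sum>k=0..n. harm (n - k) / ((real k + s) * (real k + 1 + s) * (real k + 2 + s)))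
      = ((\<Sum>k=0..n. harm (n - k) / ((real k + s) * (real k + 1 + s)))
        - (\<Sum>k=0..n. harm (n - k) / ((real k + (s + 1)) * (real k + 1 + (s + 1))))) / 2"
    unfolding sum_subtractf[symmetric] sum_divide_distrib
  proof (intro sum.cong refl)
    fix k
    define x where "x = real k + s"
    have x: "x \<noteq> 0" "x + 1 \<noteq> 0" "x + 2 \<noteq> 0" using assms by (simp_all add: x_def)
    have shift: "real k + 1 + s = x + 1" "real k + 2 + s = x + 2"
      "real k + (s + 1) = x + 1" "real k + 1 + (s + 1) = x + 2" by (simp_all add: x_def)
    show "harm (n - k) / ((real k + s) * (real k + 1 + s) * (real k + 2 + s))
        = (harm (n - k) / ((real k + s) * (real k + 1 + s))
          - harm (n - k) / ((real k + (s + 1)) * (real k + 1 + (s + 1)))) / 2"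
      unfolding shift x_def[symmetric] using x by (simp add: divide_simps) (simp add: algebra_simps)
  qed
  also have "\<dots> = 1 / 2 * (harm (n + 1) / (s * (s + 1))
          - 1 / (real n + 1 + s) * (harm (n + 1) + Hz (real n + s) - Hz (s - 1))
          + 1 / (real n + 2 + s) * (harm (n + 1) + Hz (real n + 1 + s) - Hz s))"
  proof -
    define A where "A = real n + 1 + s"
    have nz: "s \<noteq> 0" "s + 1 \<noteq> 0" "A \<noteq> 0" "A + 1 \<noteq> 0" using assms by (simp_all add: A_def)
    have args: "real n + (s + 1) = real n + 1 + s" "s + 1 - 1 = s" "real n + 1 + (s + 1) = A + 1"
      "real n + 2 + s = A + 1" by (simp_all add: A_def)
    have n1: "real n + 1 = A - s" by (simp add: A_def)
    have "s + 1 > 0" using assms by simp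
    show ?thesis
      unfolding sum_harm_div_rising2[OF assms] sum_harm_div_rising2[OF \<open>s + 1 > 0\<close>] args
      unfolding A_def[symmetric] n1 using assms nz by (simp add: divide_simps) (simp add: algebra_simps)
  qed
  finally show ?thesis .
qed

theorem corollary14:
  fixes n :: nat
  shows "(\<forall>r s :: complex. r \<notin> neg_Ints \<and> s \<notin> neg_Ints \<and> s \<noteq> 0 \<and> r - s \<notin> neg_Ints \<longrightarrow>
            (\<Sum>k<n. harm (n - 1 - k) / ((of_nat k + s) * cbinom (r + of_nat k + 1) (r - s + 1)))
            = harm n / (s * cbinom r s)
              - 1 / (r - s + 1) * (\<Sum>k=1..n. 1 / (of_nat k * cbinom (of_nat (n - k) + r) (r - s + 1))))
       \<and> (\<forall>s :: real. s \<ge> 1 \<longrightarrow>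
            (\<Sum>k=0..n. harm (n - k) / ((real k + s) * (real k + 1 + s)))
              = (real n + 1) / (s * (real n + 1 + s)) * harm (n + 1)
                - 1 / (real n + 1 + s) * (Hz (real n + s) - Hz (s - 1))
            \<and> (\<Sum>k=0..n. harm (n - k) / ((real k + s) * (real k + 1 + s) * (real k + 2 + s)))
              = 1 / 2 * (harm (n + 1) / (s * (s + 1))
                  - 1 / (real n + 1 + s) * (harm (n + 1) + Hz (real n + s) - Hz (s - 1))
                  + 1 / (real n + 2 + s) * (harm (n + 1) + Hz (real n + 1 + s) - Hz s)))"
proof -
  have "s \<notin> \<int>\<^sub>\<le>\<^sub>0" if "s \<notin> neg_Ints" "s \<noteq> 0" for s :: complex
    using that by (simp add: nonpos_Ints_iff_zero_or_neg_Ints)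
  moreover have "x + 1 \<notin> \<int>\<^sub>\<le>\<^sub>0" if "x \<notin> neg_Ints" for x :: complex
    using that plus_one_in_nonpos_Ints_iff by blast
  moreover have "s > 0" if "s \<ge> 1" for s :: real
    using that by simp
  ultimately show ?thesis
    using harm_cbinom_sum sum_harm_div_rising2 sum_harm_div_rising3 by blast
qed

end
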